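(* Let $N\ge 1$ be an integer, $\delta>0$, $\mu>0$, let $\underline{x}\le\overline{x}$ and $x_0$ be real numbers, and let $\underline{u},\overline{u}\in\mathbb{R}^N$ (indexed $k=0,\dots,N-1$). Define real numbers $\max\mathcal{F}_k,\min\mathcal{F}_k$ for $k=0,\dots,N$ by $\max\mathcal{F}_0=\min\mathcal{F}_0=x_0$ and, for $k=0,\dots,N-1$, $$\max\mathcal{F}_{k+1}=\min\{\overline{x},\ \max\mathcal{F}_k-\delta\underline{u}_k\},\qquad \min\mathcal{F}_{k+1}=\max\{\underline{x},\ \min\mathcal{F}_k-\delta\overline{u}_k\},$$ and let $\mathcal{F}_k=[\min\mathcal{F}_k,\max\mathcal{F}_k]$. Assume the problem is feasible in the sense that $\underline{u}_k\le\overline{u}_k$ for all $k=0,\dots,N-1$ and $\max\mathcal{F}_k\ge\min\mathcal{F}_k$ for all $k=1,\dots,N$. Define $\max\mathcal{G}_N=\max\mathcal{F}_N$, $\min\mathcal{G}_N=\min\mathcal{F}_N$, $x^{(0)}_N=\tfrac12(\max\mathcal{G}_N+\min\mathcal{G}_N)$, and for $k=N-1,\dots,0$: $$\max\mathcal{G}_k=\min\{\max\mathcal{G}_{k+1}+\delta\overline{u}_k,\ \max\mathcal{F}_k\},\qquad \min\mathcal{G}_k=\max\{\min\mathcal{G}_{k+1}+\delta\underline{u}_k,\ \min\mathcal{F}_k\},$$ $$x^{(0)}_k=\tfrac12(\max\mathcal{G}_k+\min\mathcal{G}_k),\qquad u^{(0)}_k=\tfrac1\delta\big(x^{(0)}_k-x^{(0)}_{k+1}\big).$$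 Let $\Phi\in\mathbb{R}^N$ be the vector of all ones, let $\Psi\in\mathbb{R}^{N\times N}$ be the lower triangular matrix with $\Psi_{ij}=\delta$ for $j\le i$ and $\Psi_{ij}=0$ for $j>i$, and set $$A=\begin{bmatrix}\Psi\\-\Psi\end{bmatrix}\in\mathbb{R}^{2N\times N},\qquad b=\begin{bmatrix}\Phi(x_0-\overline{x})\\-\Phi(x_0-\underline{x})\end{bmatrix}\in\mathbb{R}^{2N}.$$ Let $u^{(0)}=(u^{(0)}_0,\dots,u^{(0)}_{N-1})$, $s^{(0)}=Au^{(0)}-b$, $S^{(0)}=\mathrm{diag}(s^{(0)})$, and $\theta_1^{(0)}=\frac1\mu (S^{(0)})^{-1}\mathbf{1}$ (when defined). Then $(u^{(0)},s^{(0)},\theta_1^{(0)})$ satisfy all of the conditions $$S^{(0)}\theta_1^{(0)}=\tfrac1\mu\mathbf{1},\quad Au^{(0)}-b-s^{(0)}=0,\quad u^{(0)}-\underline{u}\ge0,\quad \overline{u}-u^{(0)}\ge0,\quad s^{(0)}>0,\quad \theta_1^{(0)}\ge0$$ if and only if $\max\mathcal{F}_k>\underline{x}$ and $\min\mathcal{F}_k<\overline{x}$ for all $k\in\{1,\dots,N\}$.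
   Context: This concerns initialization of an interior point method for the problem $\min_u F(u)$ subject to $x=\Phi x_0-\Psi u$, $\underline{x}\le x_k\le\overline{x}$ for $k=1,\dots,N$, and $\underline{u}\le u\le\overline{u}$, rewritten with slack variable $s\in\mathbb{R}^{2N}$ as $Au-b-s=0$, $s\ge0$; note $Au-b=(\overline{x}\Phi-x,\ x-\underline{x}\Phi)$. The intervals $\mathcal{F}_k$ are the sets of reachable feasible states at step $k$, the sets $\mathcal{G}_k$ form a backward-refined tube, and $\mathcal{X}=[\underline{x},\overline{x}]$. Vector inequalities are componentwise and $\mathbf{1}$ is the all-ones vector of length $2N$. *)

theory Defs
  imports Main "HOL.Real"
begin

text \<open>Vectors in R^N are functions nat => real, only indices below N matter.
  Parameters: xlo, xhi (state bounds), x0 (initial state), d (delta),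
  ulo, uhi (input bounds).\<close>

fun maxF :: "real \<Rightarrow> real \<Rightarrow> real \<Rightarrow> (nat \<Rightarrow> real) \<Rightarrow> nat \<Rightarrow> real" where
  "maxF xhi x0 d ulo 0 = x0"
| "maxF xhi x0 d ulo (Suc k) = min xhi (maxF xhi x0 d ulo k - d * ulo k)"

fun minF :: "real \<Rightarrow> real \<Rightarrow> real \<Rightarrow> (nat \<Rightarrow> real) \<Rightarrow> nat \<Rightarrow> real" where
  "minF xlo x0 d uhi 0 = x0"
| "minF xlo x0 d uhi (Suc k) = max xlo (minF xlo x0 d uhi k - d * uhi k)"

text \<open>Backward recursion for the tube G: maxGb j is the value of max G at step N - j.\<close>
fun maxGb :: "nat \<Rightarrow> real \<Rightarrow> real \<Rightarrow> real \<Rightarrow> (nat \<Rightarrow> real) \<Rightarrow> (nat \<Rightarrow> real) \<Rightarrow> nat \<Rightarrow> real" where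
  "maxGb N xhi x0 d ulo uhi 0 = maxF xhi x0 d ulo N"
| "maxGb N xhi x0 d ulo uhi (Suc j) =
     min (maxGb N xhi x0 d ulo uhi j + d * uhi (N - Suc j)) (maxF xhi x0 d ulo (N - Suc j))"

fun minGb :: "nat \<Rightarrow> real \<Rightarrow> real \<Rightarrow> real \<Rightarrow> (nat \<Rightarrow> real) \<Rightarrow> (nat \<Rightarrow> real) \<Rightarrow> nat \<Rightarrow> real" where
  "minGb N xlo x0 d ulo uhi 0 = minF xlo x0 d uhi N"
| "minGb N xlo x0 d ulo uhi (Suc j) =
     max (minGb N xlo x0 d ulo uhi j + d * ulo (N - Suc j)) (minF xlo x0 d uhi (N - Suc j))"

definition maxG :: "nat \<Rightarrow> real \<Rightarrow> real \<Rightarrow> real \<Rightarrow> (nat \<Rightarrow> real) \<Rightarrow> (nat \<Rightarrow> real) \<Rightarrow> nat \<Rightarrow> real" where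
  "maxG N xhi x0 d ulo uhi k = maxGb N xhi x0 d ulo uhi (N - k)"

definition minG :: "nat \<Rightarrow> real \<Rightarrow> real \<Rightarrow> real \<Rightarrow> (nat \<Rightarrow> real) \<Rightarrow> (nat \<Rightarrow> real) \<Rightarrow> nat \<Rightarrow> real" where
  "minG N xlo x0 d ulo uhi k = minGb N xlo x0 d ulo uhi (N - k)"

definition xinit :: "nat \<Rightarrow> real \<Rightarrow> real \<Rightarrow> real \<Rightarrow> real \<Rightarrow> (nat \<Rightarrow> real) \<Rightarrow> (nat \<Rightarrow> real) \<Rightarrow> nat \<Rightarrow> real" where
  "xinit N xlo xhi x0 d ulo uhi k =
     (maxG N xhi x0 d ulo uhi k + minG N xlo x0 d ulo uhi k) / 2"

definition uinit :: "nat \<Rightarrow> real \<Rightarrow> real \<Rightarrow> real \<Rightarrow> real \<Rightarrow> (nat \<Rightarrow> real) \<Rightarrow> (nat \<Rightarrow> real) \<Rightarrow> nat \<Rightarrow> real" where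
  "uinit N xlo xhi x0 d ulo uhi k =
     (1 / d) * (xinit N xlo xhi x0 d ulo uhi k - xinit N xlo xhi x0 d ulo uhi (Suc k))"

definition Psi :: "real \<Rightarrow> nat \<Rightarrow> nat \<Rightarrow> real" where
  "Psi d i j = (if j \<le> i then d else 0)"

definition Amat :: "nat \<Rightarrow> real \<Rightarrow> nat \<Rightarrow> nat \<Rightarrow> real" where
  "Amat N d i j = (if i < N then Psi d i j else - Psi d (i - N) j)"

definition bvec :: "nat \<Rightarrow> real \<Rightarrow> real \<Rightarrow> real \<Rightarrow> nat \<Rightarrow> real" where
  "bvec N xlo xhi x0 i = (if i < N then x0 - xhi else - (x0 - xlo))"

definition Amul :: "nat \<Rightarrow> real \<Rightarrow> (nat \<Rightarrow> real) \<Rightarrow> nat \<Rightarrow> real" where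
  "Amul N d u i = (\<Sum>j<N. Amat N d i j * u j)"

definition sinit :: "nat \<Rightarrow> real \<Rightarrow> real \<Rightarrow> real \<Rightarrow> real \<Rightarrow> (nat \<Rightarrow> real) \<Rightarrow> (nat \<Rightarrow> real) \<Rightarrow> nat \<Rightarrow> real" where
  "sinit N xlo xhi x0 d ulo uhi i =
     Amul N d (uinit N xlo xhi x0 d ulo uhi) i - bvec N xlo xhi x0 i"

text \<open>Where s i = 0 (S singular) this convention gives 0, so the condition S theta = (1/mu) 1
  fails, exactly as when theta is undefined.\<close>
definition thetainit :: "nat \<Rightarrow> real \<Rightarrow> real \<Rightarrow> real \<Rightarrow> real \<Rightarrow> real \<Rightarrow> (nat \<Rightarrow> real) \<Rightarrow> (nat \<Rightarrow> real) \<Rightarrow> nat \<Rightarrow> real" where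
  "thetainit N mu xlo xhi x0 d ulo uhi i = (1 / mu) * inverse (sinit N xlo xhi x0 d ulo uhi i)"

end

theory Submission
  imports Defs
begin

(* The backward tube is nested, F_min <= G_min <= G_max <= F_max, and each of its ends moves
   by an admissible step, so the midpoints x^(0) give inputs within [u_lo, u_hi]; the slacks are
   xhi - x^(0)_k and x^(0)_k - xlo, and the theorem reduces to x^(0)_k lying strictly inside
   [xlo, xhi].  G_max <= F_max <= xhi, so x^(0)_k < xhi fails only if G_min_k = F_max_k = xhi.
   But G_min can reach F_max only where F is a single point: the point F_(k+1) lies above xlo,
   so the lower recursion is not clipped there and G_min_(k+1) + d u_lo_k <= F_min_k.  The
   bound x^(0)_k > xlo is the same argument for the data reflected by x |-> -x. *)

declare maxF.simps(2)[simp del] minF.simps(2)[simp del]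

lemma maxF_Suc_le: "maxF xhi x0 d ulo (Suc k) \<le> maxF xhi x0 d ulo k - d * ulo k"
  by (simp add: maxF.simps)

lemma minF_Suc_ge: "minF xlo x0 d uhi k - d * uhi k \<le> minF xlo x0 d uhi (Suc k)"
  by (simp add: minF.simps)

lemma maxF_Suc_le_xhi: "maxF xhi x0 d ulo (Suc k) \<le> xhi"
  by (simp add: maxF.simps)

lemma minF_Suc_eq:
  "xlo < minF xlo x0 d uhi (Suc k) \<Longrightarrow> minF xlo x0 d uhi (Suc k) = minF xlo x0 d uhi k - d * uhi k"
  by (simp add: minF.simps max_def split: if_splits)

lemma maxF_uminus: "maxF (- xlo) (- x0) d (\<lambda>k. - uhi k) k = - minF xlo x0 d uhi k"
  by (induction k) (simp_all add: maxF.simps minF.simps min_def max_def)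

lemma minF_uminus: "minF (- xhi) (- x0) d (\<lambda>k. - ulo k) k = - maxF xhi x0 d ulo k"
  by (induction k) (simp_all add: maxF.simps minF.simps min_def max_def)

lemma minGb_uminus:
  "minGb N (- xhi) (- x0) d (\<lambda>k. - uhi k) (\<lambda>k. - ulo k) j = - maxGb N xhi x0 d ulo uhi j"
  by (induction j) (simp_all add: minF_uminus min_def max_def)

lemma maxGb_uminus:
  "maxGb N (- xlo) (- x0) d (\<lambda>k. - uhi k) (\<lambda>k. - ulo k) j = - minGb N xlo x0 d ulo uhi j"
  by (induction j) (simp_all add: maxF_uminus min_def max_def)

lemma xinit_uminus:
  "xinit N (- xhi) (- xlo) (- x0) d (\<lambda>k. - uhi k) (\<lambda>k. - ulo k) k = - xinit N xlo xhi x0 d ulo uhi k"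
  by (simp add: xinit_def maxG_def minG_def minGb_uminus maxGb_uminus field_simps)

lemma Psi_sum_differences:
  fixes x :: "nat \<Rightarrow> real"
  assumes "i < N" and "d \<noteq> 0"
  shows "(\<Sum>j<N. Psi d i j * ((1 / d) * (x j - x (Suc j)))) = x 0 - x (Suc i)"
proof -
  have "(\<Sum>j<N. Psi d i j * ((1 / d) * (x j - x (Suc j))))
      = (\<Sum>j<N. if j \<le> i then x j - x (Suc j) else 0)"
    using assms(2) by (intro sum.cong) (auto simp: Psi_def)
  also have "\<dots> = (\<Sum>j\<in>{j\<in>{..<N}. j \<le> i}. x j - x (Suc j))"
    by (rule sum.inter_filter[symmetric]) simp
  also have "{j\<in>{..<N}. j \<le> i} = {..i}"
    using assms(1) by auto
  finally show ?thesis
    by (simp add: sum_telescope)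
qed

lemma Amul_upper: "i < N \<Longrightarrow> Amul N d u i = (\<Sum>j<N. Psi d i j * u j)"
  by (simp add: Amul_def Amat_def)

lemma Amul_lower: "Amul N d u (N + i) = - (\<Sum>j<N. Psi d i j * u j)"
  by (simp add: Amul_def Amat_def sum_negf)

locale feasible_tube =
  fixes N :: nat and d xlo xhi x0 :: real and ulo uhi :: "nat \<Rightarrow> real"
  assumes d_pos: "d > 0"
    and ulo_le_uhi: "\<forall>k<N. ulo k \<le> uhi k"
    and minF_le_maxF_feasible: "\<forall>k\<in>{1..N}. minF xlo x0 d uhi k \<le> maxF xhi x0 d ulo k"
begin

abbreviation "Fmax k \<equiv> maxF xhi x0 d ulo k"
abbreviation "Fmin k \<equiv> minF xlo x0 d uhi k"
abbreviation "Gmax k \<equiv> maxG N xhi x0 d ulo uhi k"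
abbreviation "Gmin k \<equiv> minG N xlo x0 d ulo uhi k"
abbreviation "x k \<equiv> xinit N xlo xhi x0 d ulo uhi k"
abbreviation "u k \<equiv> uinit N xlo xhi x0 d ulo uhi k"
abbreviation "s i \<equiv> sinit N xlo xhi x0 d ulo uhi i"

lemma maxG_N: "Gmax N = Fmax N"
  by (simp add: maxG_def)

lemma minG_N: "Gmin N = Fmin N"
  by (simp add: minG_def)

lemma maxG_step: "k < N \<Longrightarrow> Gmax k = min (Gmax (Suc k) + d * uhi k) (Fmax k)"
  by (simp add: maxG_def Suc_diff_Suc[symmetric] del: Suc_diff_Suc)

lemma minG_step: "k < N \<Longrightarrow> Gmin k = max (Gmin (Suc k) + d * ulo k) (Fmin k)"
  by (simp add: minG_def Suc_diff_Suc[symmetric] del: Suc_diff_Suc)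

lemma d_mult_ulo_le_uhi: "k < N \<Longrightarrow> d * ulo k \<le> d * uhi k"
  using d_pos ulo_le_uhi by simp

lemma minF_le_maxF: "k \<le> N \<Longrightarrow> Fmin k \<le> Fmax k"
  using minF_le_maxF_feasible by (cases k) auto

lemma tube_nested: "k \<le> N \<Longrightarrow> Fmin k \<le> Gmin k \<and> Gmin k \<le> Gmax k \<and> Gmax k \<le> Fmax k"
proof (induction k rule: inc_induct)
  case base
  show ?case
    using minF_le_maxF[of N] by (simp add: maxG_N minG_N)
next
  case (step k)
  then show ?case
    using minF_le_maxF[of k] maxF_Suc_le[of xhi x0 d ulo k] minF_Suc_ge[of xlo x0 d uhi k]
      d_mult_ulo_le_uhi[of k]
    by (simp add: maxG_step minG_step)
qed

lemma tube_step_bounds: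
  assumes "k < N"
  shows "Gmax (Suc k) + d * ulo k \<le> Gmax k" "Gmax k \<le> Gmax (Suc k) + d * uhi k"
    and "Gmin (Suc k) + d * ulo k \<le> Gmin k" "Gmin k \<le> Gmin (Suc k) + d * uhi k"
  using assms tube_nested[of "Suc k"] maxF_Suc_le[of xhi x0 d ulo k] minF_Suc_ge[of xlo x0 d uhi k]
    d_mult_ulo_le_uhi[of k]
  by (simp_all add: maxG_step minG_step)

lemma xinit_0: "x 0 = x0"
  using tube_nested[of 0] by (simp add: xinit_def maxF.simps minF.simps)

lemma uinit_bounds: "k < N \<Longrightarrow> ulo k \<le> u k \<and> u k \<le> uhi k"
  using tube_step_bounds[of k] d_pos by (simp add: uinit_def xinit_def field_simps)

lemma Psi_uinit_sum: "i < N \<Longrightarrow> (\<Sum>j<N. Psi d i j * u j) = x0 - x (Suc i)"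
  unfolding uinit_def using Psi_sum_differences d_pos xinit_0 by simp

lemma sinit_upper: "i < N \<Longrightarrow> s i = xhi - x (Suc i)"
  by (simp add: sinit_def Amul_upper Psi_uinit_sum bvec_def)

lemma sinit_lower: "i < N \<Longrightarrow> s (N + i) = x (Suc i) - xlo"
  by (simp add: sinit_def Amul_lower Psi_uinit_sum bvec_def)

lemma sinit_pos_iff: "(\<forall>i<2*N. s i > 0) \<longleftrightarrow> (\<forall>k\<in>{1..N}. xlo < x k \<and> x k < xhi)"
proof
  assume pos: "\<forall>i<2*N. s i > 0"
  show "\<forall>k\<in>{1..N}. xlo < x k \<and> x k < xhi"
  proof
    fix k assume "k \<in> {1..N}"
    then obtain i where "k = Suc i" "i < N"
      by (cases k) auto
    then show "xlo < x k \<and> x k < xhi"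
      using pos[rule_format, of i] pos[rule_format, of "N + i"] sinit_upper sinit_lower by auto
  qed
next
  assume box: "\<forall>k\<in>{1..N}. xlo < x k \<and> x k < xhi"
  show "\<forall>i<2*N. s i > 0"
  proof (intro allI impI)
    fix i assume "i < 2*N"
    then consider "i < N" | j where "i = N + j" "j < N"
      by (metis add_diff_inverse_nat mult_2 nat_add_left_cancel_less)
    then show "s i > 0"
      by cases (use box sinit_upper sinit_lower in force)+
  qed
qed

lemma minG_less_maxF:
  assumes maxF_above: "\<forall>i\<in>{1..N}. xlo < Fmax i"
  shows "k \<le> N \<Longrightarrow> Fmin k < Fmax k \<Longrightarrow> Gmin k < Fmax k"
proof (induction k rule: inc_induct)
  case base
  then show ?case by (simp add: minG_N)
next
  case (step k)
  have "Gmin (Suc k) + d * ulo k < Fmax k"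
  proof (cases "Fmin (Suc k) < Fmax (Suc k)")
    case True
    then show ?thesis
      using step.IH maxF_Suc_le[of xhi x0 d ulo k] by simp
  next
    case False
    then have "Gmin (Suc k) = Fmin (Suc k)"
      using tube_nested[of "Suc k"] step.hyps by simp
    moreover have "Fmin (Suc k) = Fmin k - d * uhi k"
      using False maxF_above[rule_format, of "Suc k"] step.hyps by (intro minF_Suc_eq) simp
    ultimately show ?thesis
      using step.prems d_mult_ulo_le_uhi[of k] step.hyps by simp
  qed
  then show ?case
    using step.prems step.hyps by (simp add: minG_step)
qed

lemma xinit_less_xhi:
  assumes "\<forall>i\<in>{1..N}. xlo < Fmax i" and "k \<in> {1..N}" and "Fmin k < xhi"
  shows "x k < xhi"
proof -
  have "Fmax k \<le> xhi"
    using assms(2) maxF_Suc_le_xhi by (cases k) auto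
  moreover have "Gmin k < xhi"
    using minG_less_maxF[OF assms(1), of k] tube_nested[of k] assms(2,3) calculation
    by (cases "Fmin k < Fmax k") auto
  ultimately show ?thesis
    using tube_nested[of k] assms(2) by (simp add: xinit_def)
qed

lemma xinit_in_open_box_iff:
  "(\<forall>k\<in>{1..N}. xlo < x k \<and> x k < xhi) \<longleftrightarrow> (\<forall>k\<in>{1..N}. xlo < Fmax k \<and> Fmin k < xhi)"
proof
  assume "\<forall>k\<in>{1..N}. xlo < x k \<and> x k < xhi"
  then show "\<forall>k\<in>{1..N}. xlo < Fmax k \<and> Fmin k < xhi"
    using tube_nested by (fastforce simp: xinit_def)
next
  assume F: "\<forall>k\<in>{1..N}. xlo < Fmax k \<and> Fmin k < xhi"
  interpret mirror: feasible_tube N d "- xhi" "- xlo" "- x0" "\<lambda>k. - uhi k" "\<lambda>k. - ulo k"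
    using d_pos ulo_le_uhi minF_le_maxF_feasible
    by unfold_locales (simp_all add: maxF_uminus minF_uminus)
  show "\<forall>k\<in>{1..N}. xlo < x k \<and> x k < xhi"
    using F xinit_less_xhi mirror.xinit_less_xhi
    by (simp add: maxF_uminus minF_uminus xinit_uminus)
qed

end

theorem proposition1:
  fixes N :: nat and d mu xlo xhi x0 :: real and ulo uhi :: "nat \<Rightarrow> real"
  assumes "N \<ge> 1" and "d > 0" and "mu > 0" and "xlo \<le> xhi"
    and "\<forall>k<N. ulo k \<le> uhi k"
    and "\<forall>k\<in>{1..N}. maxF xhi x0 d ulo k \<ge> minF xlo x0 d uhi k"
  shows "((\<forall>i<2*N. sinit N xlo xhi x0 d ulo uhi i * thetainit N mu xlo xhi x0 d ulo uhi i = 1 / mu)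
         \<and> (\<forall>i<2*N. Amul N d (uinit N xlo xhi x0 d ulo uhi) i - bvec N xlo xhi x0 i
                      - sinit N xlo xhi x0 d ulo uhi i = 0)
         \<and> (\<forall>k<N. uinit N xlo xhi x0 d ulo uhi k - ulo k \<ge> 0)
         \<and> (\<forall>k<N. uhi k - uinit N xlo xhi x0 d ulo uhi k \<ge> 0)
         \<and> (\<forall>i<2*N. sinit N xlo xhi x0 d ulo uhi i > 0)
         \<and> (\<forall>i<2*N. thetainit N mu xlo xhi x0 d ulo uhi i \<ge> 0))
     \<longleftrightarrow> (\<forall>k\<in>{1..N}. maxF xhi x0 d ulo k > xlo \<and> minF xlo x0 d uhi k < xhi)"
proof -
  interpret feasible_tube N d xlo xhi x0 ulo uhi
    using assms by unfold_locales auto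
  have "\<forall>i<2*N. Amul N d (uinit N xlo xhi x0 d ulo uhi) i - bvec N xlo xhi x0 i - s i = 0"
    by (simp add: sinit_def)
  moreover have "\<forall>k<N. u k - ulo k \<ge> 0 \<and> uhi k - u k \<ge> 0"
    using uinit_bounds by simp
  moreover have "s i > 0 \<Longrightarrow>
      s i * thetainit N mu xlo xhi x0 d ulo uhi i = 1 / mu \<and> thetainit N mu xlo xhi x0 d ulo uhi i \<ge> 0"
    for i using \<open>mu > 0\<close> by (simp add: thetainit_def)
  ultimately show ?thesis
    using sinit_pos_iff xinit_in_open_box_iff by auto
qed

end
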